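(* Let $\varepsilon,\gamma>0$ and $\delta>0$, and let $d\geq \frac{1}{(2\varepsilon+\gamma)^{1/\gamma}}$. There is a ReLU neural network of depth $7$, width $\mathcal O(d^{\max(4\varepsilon+2\gamma,1)})$ and magnitude of weights bounded by $1/\delta$ which, given any $(d,\varepsilon)$-sparse vector $\mathbf{x}'\in\mathcal S^d_\delta$ as input, returns a vector $\mathbf{x}''$ of dimension $d^{\varepsilon}$ containing all the non-zero entries of $\mathbf{x}'$, padded with $0$'s if $\mathbf{x}'$ has fewer than $d^{\varepsilon}$ non-zero entries.
   Context: A vector $\mathbf{x}\in\mathbb{R}^d$ is $(d,\varepsilon)$-sparse if it has at most $d^{\varepsilon}$ non-zero entries. $\mathcal S^d_\delta$ is the set of vectors $\mathbf{x}\in\mathbb{R}^d$ whose non-zero entries all lie in $[\delta,1-\delta]$ and are pairwise at distance at least $\delta$. A ReLU network applies $[z]_+=\max\{0,z\}$ after each affine hidden map, with an affine output layer; depth is the number of hidden layers plus one; width is the number of neurons in the largest hidden layer. *)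

theory Defs
  imports "HOL-Library.Multiset" Complex_Main
begin

text \<open>Vectors in R^n are represented as real lists of length n.
A layer is (input dimension, output dimension, weight matrix W, bias b),
realising v \<mapsto> W v + b.\<close>

type_synonym layer = "nat \<times> nat \<times> (nat \<Rightarrow> nat \<Rightarrow> real) \<times> (nat \<Rightarrow> real)"

definition relu :: "real \<Rightarrow> real" where
  "relu z = max 0 z"

definition layer_in :: "layer \<Rightarrow> nat" where
  "layer_in L = fst L"

definition layer_out :: "layer \<Rightarrow> nat" where
  "layer_out L = fst (snd L)"

definition apply_affine :: "layer \<Rightarrow> real list \<Rightarrow> real list" where
  "apply_affine L v = (case L of (n, m, W, b) \<Rightarrow>
      map (\<lambda>i. (\<Sum>j<n. W i j * v ! j) + b i) [0..<m])"

fun eval_net :: "layer list \<Rightarrow> real list \<Rightarrow> real list" where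
  "eval_net [] v = v"
| "eval_net [L] v = apply_affine L v"
| "eval_net (L # Ls) v = eval_net Ls (map relu (apply_affine L v))"

definition valid_net :: "nat \<Rightarrow> nat \<Rightarrow> layer list \<Rightarrow> bool" where
  "valid_net n_in n_out Ls \<longleftrightarrow> Ls \<noteq> [] \<and> layer_in (hd Ls) = n_in \<and> layer_out (last Ls) = n_out
     \<and> (\<forall>i. Suc i < length Ls \<longrightarrow> layer_out (Ls ! i) = layer_in (Ls ! Suc i))"

text \<open>Depth = number of hidden layers + 1 = number of affine maps.\<close>
definition net_depth :: "layer list \<Rightarrow> nat" where
  "net_depth Ls = length Ls"

definition net_width :: "layer list \<Rightarrow> nat" where
  "net_width Ls = Max (insert 0 (set (map layer_out (butlast Ls))))"

definition weights_bounded :: "real \<Rightarrow> layer list \<Rightarrow> bool" where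
  "weights_bounded B Ls \<longleftrightarrow> (\<forall>L\<in>set Ls. case L of (n, m, W, b) \<Rightarrow>
      (\<forall>i<m. \<forall>j<n. \<bar>W i j\<bar> \<le> B) \<and> (\<forall>i<m. \<bar>b i\<bar> \<le> B))"

definition sparse :: "nat \<Rightarrow> real \<Rightarrow> real list \<Rightarrow> bool" where
  "sparse d \<epsilon> x \<longleftrightarrow> length x = d \<and> real (card {i. i < d \<and> x ! i \<noteq> 0}) \<le> real d powr \<epsilon>"

definition in_S :: "nat \<Rightarrow> real \<Rightarrow> real list \<Rightarrow> bool" where
  "in_S d \<delta> x \<longleftrightarrow> length x = d
     \<and> (\<forall>i<d. x ! i \<noteq> 0 \<longrightarrow> \<delta> \<le> x ! i \<and> x ! i \<le> 1 - \<delta>)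
     \<and> (\<forall>i<d. \<forall>j<d. i \<noteq> j \<and> x ! i \<noteq> 0 \<and> x ! j \<noteq> 0 \<longrightarrow> \<delta> \<le> \<bar>x ! i - x ! j\<bar>)"

end

theory Submission
  imports Defs "HOL-Library.FuncSet"
begin

text \<open>
  Hash the d coordinates into R = 2k^2 buckets by each of T = k b + 1 functions, where
  2^b > d. A random function is injective on a fixed set of at most k coordinates with
  probability at least 1/2 and there are at most (d + 1)^k such sets, so some family of T
  functions contains, for every such set, a function injective on it.

  The network computes, for every hash function t and bucket r, the sum of the entries hashed
  to r and the number of nonzero entries hashed to r; the latter is possible because entries
  of S_\<delta> are 0 or at least \<delta>, so x/\<delta> clipped at 1 is the indicator of x \<noteq> 0. It then
  selects the first t whose buckets all hold at most one nonzero entry, keeps only the buckets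
  of that t, and moves the value y of each occupied bucket r to the output position q, the
  number of occupied buckets below r. This uses that
  relu(y - q + j) - relu(j - q) - relu(y - q + j - 1) + relu(j - q - 1) is y for q = j and 0
  otherwise, whenever 0 \<le> y \<le> 1. All weights and biases are 0, 1, -1 or 1/\<delta>, and the width is
  O(d + k^3 log d) = O(d^max(4\<epsilon>, 1)). For \<delta> > 1/2 the zero vector is the only admissible
  input and the zero network does the job.
\<close>

section \<open>Perfect hash families\<close>

lemma card_PiE_collision_le:
  assumes "finite I" "finite A" "i \<in> I" "j \<in> I" "i \<noteq> j"
  shows "card {f \<in> Pi\<^sub>E I (\<lambda>_. A). f i = f j} \<le> card A ^ (card I - 1)"
proof -
  let ?F = "{f \<in> Pi\<^sub>E I (\<lambda>_. A). f i = f j}"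
  let ?J = "I - {j}"
  have "inj_on (\<lambda>f. restrict f ?J) ?F"
  proof (rule inj_onI)
    fix f g assume f: "f \<in> ?F" and g: "g \<in> ?F" and eq: "restrict f ?J = restrict g ?J"
    have "f y = g y" if "y \<in> ?J" for y
      using that eq by (metis restrict_apply')
    moreover have "f j = g j"
      using calculation f g assms(3,5) by force
    ultimately show "f = g"
      using f g by (metis (no_types, lifting) DiffI PiE_ext mem_Collect_eq singletonD)
  qed
  moreover have "(\<lambda>f. restrict f ?J) ` ?F \<subseteq> Pi\<^sub>E ?J (\<lambda>_. A)"
    by (auto simp: restrict_PiE_iff split: if_splits)
  ultimately have "card ?F \<le> card (Pi\<^sub>E ?J (\<lambda>_. A))"
    using assms(1,2) by (intro card_inj_on_le) (auto intro: finite_PiE)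
  also have "\<dots> = card A ^ (card I - 1)"
    using assms by (simp add: card_PiE)
  finally show ?thesis .
qed

lemma card_PiE_not_inj_on_le:
  assumes "finite I" "finite A" "S \<subseteq> I" "2 * card S ^ 2 \<le> card A"
  shows "2 * card {f \<in> Pi\<^sub>E I (\<lambda>_. A). \<not> inj_on f S} \<le> card (Pi\<^sub>E I (\<lambda>_. A))"
proof (cases "S = {}")
  case False
  let ?F = "Pi\<^sub>E I (\<lambda>_. A)"
  let ?coll = "\<lambda>p. {f \<in> ?F. f (fst p) = f (snd p)}"
  define P where "P = {p \<in> S \<times> S. fst p \<noteq> snd p}"
  have "finite S"
    using assms(1,3) finite_subset by blast
  then have "finite P"
    unfolding P_def by simp
  have "card P \<le> card S ^ 2"
    using card_mono[of "S \<times> S" P] \<open>finite S\<close>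
    by (auto simp: P_def card_cartesian_product power2_eq_square)
  have "finite ?F"
    using assms(1,2) by (rule finite_PiE)
  have "{f \<in> ?F. \<not> inj_on f S} \<subseteq> (\<Union>p\<in>P. ?coll p)"
    unfolding inj_on_def P_def by fastforce
  then have "card {f \<in> ?F. \<not> inj_on f S} \<le> card (\<Union>p\<in>P. ?coll p)"
    using \<open>finite ?F\<close> \<open>finite P\<close> by (intro card_mono) auto
  also have "\<dots> \<le> (\<Sum>p\<in>P. card (?coll p))"
    using \<open>finite P\<close> by (rule card_UN_le)
  also have "\<dots> \<le> (\<Sum>p\<in>P. card A ^ (card I - 1))"
    using assms(1-3) by (intro sum_mono card_PiE_collision_le) (auto simp: P_def)
  also have "\<dots> \<le> card S ^ 2 * card A ^ (card I - 1)"
    using \<open>card P \<le> card S ^ 2\<close> by simp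
  finally have "2 * card {f \<in> ?F. \<not> inj_on f S} \<le> 2 * card S ^ 2 * card A ^ (card I - 1)"
    by simp
  also have "\<dots> \<le> card A * card A ^ (card I - 1)"
    using assms(4) by (rule mult_le_mono1)
  also have "\<dots> = card ?F"
    using assms(1,3) False by (auto simp: card_PiE power_eq_if)
  finally show ?thesis .
qed simp

lemma averaging_exists_half:
  assumes "finite F" "F \<noteq> {}" "finite U"
    and half: "\<And>S. S \<in> U \<Longrightarrow> card F \<le> 2 * card {f \<in> F. P f S}"
  shows "\<exists>f\<in>F. card U \<le> 2 * card {S \<in> U. P f S}"
proof (rule ccontr)
  have count: "card {x \<in> X. Q x} = (\<Sum>x\<in>X. if Q x then 1 else 0)" if "finite X" for X and Q :: "'c \<Rightarrow> bool"
    using that by (simp add: sum.If_cases Int_def)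
  have double_counting: "(\<Sum>S\<in>U. card {f \<in> F. P f S}) = (\<Sum>f\<in>F. card {S \<in> U. P f S})"
    using assms(1,3) by (simp add: count sum.swap[of _ U])
  assume "\<not> ?thesis"
  then have "(\<Sum>f\<in>F. 2 * card {S \<in> U. P f S}) < (\<Sum>f\<in>F. card U)"
    using assms(1,2) by (intro sum_strict_mono) auto
  also have "\<dots> = (\<Sum>S\<in>U. card F)"
    by simp
  also have "\<dots> \<le> (\<Sum>S\<in>U. 2 * card {f \<in> F. P f S})"
    using half by (rule sum_mono)
  finally show False
    by (simp add: double_counting sum_distrib_left[symmetric])
qed

lemma exists_injective_family:
  assumes "finite I" "finite A" "A \<noteq> {}" "finite U"
    and "\<And>S. S \<in> U \<Longrightarrow> S \<subseteq> I \<and> 2 * card S ^ 2 \<le> card A" and "card U < 2 ^ T"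
  shows "\<exists>hs. length hs = T \<and> set hs \<subseteq> Pi\<^sub>E I (\<lambda>_. A) \<and> (\<forall>S\<in>U. \<exists>h\<in>set hs. inj_on h S)"
  using assms(4-6)
proof (induction T arbitrary: U)
  case 0
  then show ?case
    by simp
next
  case (Suc T)
  let ?F = "Pi\<^sub>E I (\<lambda>_. A)"
  have "finite ?F" "?F \<noteq> {}"
    using assms(1-3) by (auto simp: finite_PiE PiE_eq_empty_iff)
  have "card ?F \<le> 2 * card {f \<in> ?F. inj_on f S}" if "S \<in> U" for S
  proof -
    have "2 * card {f \<in> ?F. \<not> inj_on f S} \<le> card ?F"
      using Suc.prems(2)[OF that] by (intro card_PiE_not_inj_on_le[OF assms(1,2)]) auto
    then show ?thesis
      using card_Int_Diff[OF \<open>finite ?F\<close>, of "{f. inj_on f S}"] by (simp add: set_diff_eq Int_def)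
  qed
  \<comment> \<open>some f is injective on at least half of the sets in U; the rest are handled recursively\<close>
  then obtain f where "f \<in> ?F" and "card U \<le> 2 * card {S \<in> U. inj_on f S}"
    using averaging_exists_half[OF \<open>finite ?F\<close> \<open>?F \<noteq> {}\<close> Suc.prems(1)] by blast
  define U' where "U' = {S \<in> U. \<not> inj_on f S}"
  have "card U = card {S \<in> U. inj_on f S} + card U'"
    using card_Int_Diff[OF Suc.prems(1), of "{S. inj_on f S}"] by (simp add: U'_def set_diff_eq Int_def)
  then have "card U' < 2 ^ T"
    using Suc.prems(3) \<open>card U \<le> 2 * card {S \<in> U. inj_on f S}\<close> by simp
  then obtain hs where "length hs = T" "set hs \<subseteq> ?F" "\<forall>S\<in>U'. \<exists>h\<in>set hs. inj_on h S"
    using Suc.IH[of U'] Suc.prems(1,2) by (auto simp: U'_def)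
  then show ?case
    using \<open>f \<in> ?F\<close> by (intro exI[of _ "f # hs"]) (auto simp: U'_def)
qed

lemma card_subsets_card_le: "card {S. S \<subseteq> {..<d::nat} \<and> card S \<le> k} \<le> Suc d ^ k"
proof -
  let ?L = "{xs. set xs \<subseteq> {..<Suc d} \<and> length xs = k}"
  \<comment> \<open>pad a listing of S with the dummy entry d up to length k\<close>
  have "S \<in> (\<lambda>xs. set xs - {d}) ` ?L" if "S \<subseteq> {..<d}" "card S \<le> k" for S
  proof
    have "finite S"
      using that(1) finite_subset by blast
    then show "S = set (sorted_list_of_set S @ replicate (k - card S) d) - {d}"
      using that(1) by auto
    show "sorted_list_of_set S @ replicate (k - card S) d \<in> ?L"
      using \<open>finite S\<close> that by auto
  qed
  then have "card {S. S \<subseteq> {..<d} \<and> card S \<le> k} \<le> card ((\<lambda>xs. set xs - {d}) ` ?L)"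
    by (intro card_mono finite_imageI finite_lists_length_eq) auto
  also have "\<dots> \<le> card ?L"
    by (intro card_image_le finite_lists_length_eq) auto
  finally show ?thesis
    by (simp add: card_lists_length_eq)
qed

lemma exists_hash_family:
  assumes "0 < k" "Suc d \<le> 2 ^ b"
  shows "\<exists>hs. length hs = k * b + 1 \<and> set hs \<subseteq> Pi\<^sub>E {..<d} (\<lambda>_. {..<2 * k ^ 2})
    \<and> (\<forall>S. S \<subseteq> {..<d} \<and> card S \<le> k \<longrightarrow> (\<exists>h\<in>set hs. inj_on h S))"
proof -
  let ?U = "{S. S \<subseteq> {..<d} \<and> card S \<le> k}"
  have "card ?U \<le> (2 ^ b) ^ k"
    using card_subsets_card_le[of d k] power_mono[OF assms(2), of k] by linarith
  also have "\<dots> < 2 ^ (k * b + 1)"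
    by (simp add: power_mult[symmetric] mult.commute)
  finally have small: "card ?U < 2 ^ (k * b + 1)" .
  have finite: "finite ?U"
    by (rule finite_subset[of _ "Pow {..<d}"]) auto
  have sparse: "S \<subseteq> {..<d} \<and> 2 * card S ^ 2 \<le> card {..<2 * k ^ 2}" if "S \<in> ?U" for S
    using that power_mono[of "card S" k 2] by simp
  have nonempty: "{..<2 * k ^ 2} \<noteq> {}"
    using assms(1) by (simp add: lessThan_empty_iff)
  obtain hs where "length hs = k * b + 1" "set hs \<subseteq> Pi\<^sub>E {..<d} (\<lambda>_. {..<2 * k ^ 2})"
      "\<forall>S\<in>?U. \<exists>h\<in>set hs. inj_on h S"
    using exists_injective_family[OF finite_lessThan finite_lessThan nonempty finite sparse small] by blast
  then show ?thesis
    by (intro exI[of _ hs]) auto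
qed

lemma sum_list_map_upt_zero: "(\<Sum>i\<leftarrow>[0..<n]. f i) = (\<Sum>i<n. f i)"
  by (simp add: sum_set_upt_conv_sum_list_nat[symmetric] atLeast0LessThan)

lemma sum_list_map_concat: "(\<Sum>x\<leftarrow>concat xss. f x) = (\<Sum>xs\<leftarrow>xss. \<Sum>x\<leftarrow>xs. f x)"
  by (induction xss) auto

lemma if_zero_mult: "(if P then a else (0::'a::mult_zero)) * b = (if P then a * b else 0)"
  by simp

lemma if_if_zero_mult:
  "(if P then a else if Q then c else (0::'a::mult_zero)) * b = (if P then a * b else if Q then c * b else 0)"
  by simp

lemma if_zero_uminus: "(if P then - a else (0::'a::group_add)) = - (if P then a else 0)"
  by simp

lemma sum_if_const_cond [simp]:
  "(\<Sum>b\<in>S. if P then f b else 0) = (if P then (\<Sum>b\<in>S. f b) else (0::'a::comm_monoid_add))"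
  by simp

lemma sum_sum_delta [simp]:
  "(\<Sum>a<(T::nat). \<Sum>b<(R::nat). if a = t \<and> b = r then c else 0)
     = (if t < T \<and> r < R then (c::'a::comm_monoid_add) else 0)"
proof -
  have "(\<Sum>b<R. if a = t \<and> b = r then c else 0) = (if a = t then (if r < R then c else 0) else 0)" for a
    by (cases "a = t") (auto simp: sum.delta)
  then show ?thesis
    by simp
qed

lemma sum_lessThan_if_less:
  "t \<le> (T::nat) \<Longrightarrow> (\<Sum>t'<T. if t' < t then f t' else (0::'a::comm_monoid_add)) = (\<Sum>t'<t. f t')"
  by (simp add: sum.If_cases lessThan_def[symmetric] Int_absorb1)

lemma sum_indicator_card:
  "finite A \<Longrightarrow> (\<Sum>i\<in>A. if P i then 1 else (0::'a::semiring_1)) = of_nat (card {i \<in> A. P i})"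
  by (simp add: sum.If_cases Int_def)

lemma inj_on_iff_card_fibers_le_one:
  "finite S \<Longrightarrow> inj_on f S \<longleftrightarrow> (\<forall>y. card {x \<in> S. f x = y} \<le> 1)"
  by (auto simp: inj_on_def card_le_Suc0_iff_eq[simplified])

lemma mset_filter_nonzero_conv_nth:
  "mset (filter (\<lambda>z. z \<noteq> 0) xs) = image_mset ((!) xs) (mset_set {i. i < length xs \<and> xs ! i \<noteq> (0::'a::zero)})"
proof -
  have "mset (filter (\<lambda>z. z \<noteq> 0) (map ((!) xs) [0..<length xs]))
      = mset (map ((!) xs) (filter (\<lambda>i. xs ! i \<noteq> 0) [0..<length xs]))"
    by (simp add: filter_map comp_def)
  also have "\<dots> = image_mset ((!) xs) (mset_set {i. i < length xs \<and> xs ! i \<noteq> 0})"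
    by (simp add: mset_set_set[symmetric] atLeast0LessThan lessThan_def Collect_conj_eq)
  finally show ?thesis
    by (simp add: map_nth)
qed

lemma mset_filter_nonzero_gather_by_rank:
  fixes y out :: "nat \<Rightarrow> 'a::comm_monoid_add"
  assumes "A \<subseteq> {..<R}" "card A \<le> k" and nonzero: "\<And>r. r \<in> A \<Longrightarrow> y r \<noteq> 0"
    and out: "\<And>j. j < k \<Longrightarrow> out j = (\<Sum>r<R. if r \<in> A \<and> card {r' \<in> A. r' < r} = j then y r else 0)"
  shows "mset (filter (\<lambda>z. z \<noteq> 0) (map out [0..<k])) = image_mset y (mset_set A)"
proof -
  define rank where "rank r = card {r' \<in> A. r' < r}" for r
  have "finite A"
    using assms(1) finite_subset by blast
  have rank_less: "rank r < k" if "r \<in> A" for r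
  proof -
    have "{r' \<in> A. r' < r} \<subset> A"
      using that by auto
    then show ?thesis
      unfolding rank_def using \<open>finite A\<close> assms(2) by (meson order_less_le_trans psubset_card_mono)
  qed
  have "strict_mono_on A rank"
    unfolding rank_def using \<open>finite A\<close> by (intro strict_mono_onI psubset_card_mono) auto
  then have "inj_on rank A"
    by (rule strict_mono_on_imp_inj_on)
  have out_rank: "out (rank r) = y r" if "r \<in> A" for r
  proof -
    have "out (rank r) = (\<Sum>r'<R. if r' = r then y r else 0)"
      unfolding out[OF rank_less[OF that]] rank_def[symmetric]
      using that \<open>inj_on rank A\<close> by (intro sum.cong) (auto dest: inj_onD)
    then show ?thesis
      using that assms(1) by auto
  qed
  have "out j = 0" if "j < k" "j \<notin> rank ` A" for j
    unfolding out[OF that(1)] rank_def[symmetric] using that(2) by (intro sum.neutral) auto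
  then have "{j. j < k \<and> out j \<noteq> 0} = rank ` A"
    using rank_less out_rank nonzero by force
  then have "mset (filter (\<lambda>z. z \<noteq> 0) (map out [0..<k])) = image_mset out (mset_set (rank ` A))"
    by (simp add: filter_map comp_def mset_set_set[symmetric] atLeast0LessThan lessThan_def Collect_conj_eq)
  also have "\<dots> = image_mset (out \<circ> rank) (mset_set A)"
    using \<open>inj_on rank A\<close> by (simp add: image_mset_mset_set[symmetric] multiset.map_comp)
  also have "\<dots> = image_mset y (mset_set A)"
    using out_rank by (intro image_mset_cong) (simp add: \<open>finite A\<close>)
  finally show ?thesis .
qed

lemma relu_pos: "0 \<le> z \<Longrightarrow> relu z = z"
  by (simp add: relu_def)

lemma relu_nonpos: "z \<le> 0 \<Longrightarrow> relu z = 0"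
  by (simp add: relu_def)

lemma relu_nonneg: "0 \<le> relu z"
  by (simp add: relu_def)

lemma relu_min_one: "0 \<le> z \<Longrightarrow> relu (z - relu (z - 1)) = min z 1"
  by (simp add: relu_def)

lemma relu_pick:
  assumes "0 \<le> y" "y \<le> 1"
  shows "relu (y - real q + real j) - relu (real j - real q) - relu (y - real q + real j - 1)
     + relu (real j - real q - 1) = (if q = j then y else 0)"
proof -
  consider "q = j" | "1 \<le> real j - real q" | "real j - real q \<le> -1"
    by linarith
  then show ?thesis
    using assms by cases (auto simp: relu_def)
qed

section \<open>Networks on named neurons\<close>

definition connect :: "('n \<Rightarrow> 'n \<Rightarrow> real) \<Rightarrow> ('n \<Rightarrow> real) \<Rightarrow> 'n list \<Rightarrow> 'n list \<Rightarrow> layer" where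
  "connect W b us ws = (length us, length ws, \<lambda>i j. W (ws ! i) (us ! j), \<lambda>i. b (ws ! i))"

lemma apply_affine_connect:
  "apply_affine (connect W b us ws) (map v us) = map (\<lambda>w. (\<Sum>u\<leftarrow>us. W w u * v u) + b w) ws"
proof -
  have "(\<Sum>j<length us. W w (us ! j) * map v us ! j) = (\<Sum>u\<leftarrow>us. W w u * v u)" for w
    by (simp add: sum_list_sum_nth atLeast0LessThan)
  then have "apply_affine (connect W b us ws) (map v us)
      = map (\<lambda>i. (\<Sum>u\<leftarrow>us. W (ws ! i) u * v u) + b (ws ! i)) [0..<length ws]"
    by (simp add: connect_def apply_affine_def)
  also have "\<dots> = map (\<lambda>w. (\<Sum>u\<leftarrow>us. W w u * v u) + b w) ws"
    by (rule nth_equalityI) simp_all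
  finally show ?thesis .
qed

lemma connect_in_out [simp]:
  "layer_in (connect W b us ws) = length us" "layer_out (connect W b us ws) = length ws"
  by (simp_all add: connect_def layer_in_def layer_out_def)

section \<open>The extraction network\<close>

datatype neuron =
    Input nat | Scaled nat | ScaledExcess nat
  | BucketSum nat nat | BucketSumExcess nat nat | CountExcess nat nat | Count nat nat
  | Value nat nat | Injective nat | Occupied nat nat | Selected nat
  | SelValue nat nat | SelOccupied nat nat | One nat | Pick nat nat nat | Out nat

text \<open>
  weight \<delta> h w u is the weight of the edge from neuron u to neuron w. Value and Occupied
  neurons reappear in later layers and, being nonnegative, are copied forward with weight 1.
  Pick s r j for s = 1, 2, 3, 4 are the four ReLUs of relu_pick for the value and the rank of
  bucket r; the constant neurons One feed in the integer j with weights 1, so that no weight or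
  bias exceeds 1/\<delta>.
\<close>
definition weight :: "real \<Rightarrow> (nat \<Rightarrow> nat \<Rightarrow> nat) \<Rightarrow> neuron \<Rightarrow> neuron \<Rightarrow> real" where
  "weight \<delta> h w u = (case w of
     Input i \<Rightarrow> 0
   | Scaled i \<Rightarrow> (if u = Input i then 1 / \<delta> else 0)
   | ScaledExcess i \<Rightarrow> (if u = Input i then 1 / \<delta> else 0)
   | BucketSum t r \<Rightarrow> (case u of Input i \<Rightarrow> if h t i = r then 1 else 0 | _ \<Rightarrow> 0)
   | BucketSumExcess t r \<Rightarrow> (case u of Input i \<Rightarrow> if h t i = r then 1 else 0 | _ \<Rightarrow> 0)
   | CountExcess t r \<Rightarrow> (case u of
         Scaled i \<Rightarrow> if h t i = r then 1 else 0
       | ScaledExcess i \<Rightarrow> if h t i = r then -1 else 0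
       | _ \<Rightarrow> 0)
   | Count t r \<Rightarrow> (case u of
         Scaled i \<Rightarrow> if h t i = r then 1 else 0
       | ScaledExcess i \<Rightarrow> if h t i = r then -1 else 0
       | _ \<Rightarrow> 0)
   | Value t r \<Rightarrow>
       (if u = BucketSum t r then 1 else if u = BucketSumExcess t r then -1
        else if u = Value t r then 1 else 0)
   | Injective t \<Rightarrow> (case u of CountExcess t' r \<Rightarrow> if t' = t then -1 else 0 | _ \<Rightarrow> 0)
   | Occupied t r \<Rightarrow>
       (if u = Count t r then 1 else if u = CountExcess t r then -1
        else if u = Occupied t r then 1 else 0)
   | Selected t \<Rightarrow> (case u of Injective t' \<Rightarrow> if t' = t then 1 else if t' < t then -1 else 0 | _ \<Rightarrow> 0)
   | SelValue t r \<Rightarrow> (if u = Value t r then 1 else if u = Selected t then 1 else 0)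
   | SelOccupied t r \<Rightarrow> (if u = Occupied t r then 1 else if u = Selected t then 1 else 0)
   | One l \<Rightarrow> 0
   | Pick s r j \<Rightarrow> (case u of
         SelValue t r' \<Rightarrow> if r' = r \<and> (s = 1 \<or> s = 3) then 1 else 0
       | SelOccupied t r' \<Rightarrow> if r' < r then -1 else 0
       | One l \<Rightarrow> if l < j then 1 else 0
       | _ \<Rightarrow> 0)
   | Out j \<Rightarrow> (case u of Pick s r j' \<Rightarrow> if j' = j then (if s = 1 \<or> s = 4 then 1 else -1) else 0 | _ \<Rightarrow> 0))"

definition bias :: "neuron \<Rightarrow> real" where
  "bias w = (case w of
     ScaledExcess _ \<Rightarrow> -1 | BucketSumExcess _ _ \<Rightarrow> -1 | CountExcess _ _ \<Rightarrow> -1 | Injective _ \<Rightarrow> 1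
   | SelValue _ _ \<Rightarrow> -1 | SelOccupied _ _ \<Rightarrow> -1 | One _ \<Rightarrow> 1
   | Pick s _ _ \<Rightarrow> (if s = 3 \<or> s = 4 then -1 else 0)
   | _ \<Rightarrow> 0)"

definition grid :: "nat \<Rightarrow> nat \<Rightarrow> (nat \<Rightarrow> nat \<Rightarrow> neuron) \<Rightarrow> neuron list" where
  "grid T R F = concat (map (\<lambda>t. map (F t) [0..<R]) [0..<T])"

definition neurons0 :: "nat \<Rightarrow> neuron list" where
  "neurons0 d = map Input [0..<d]"

definition neurons1 :: "nat \<Rightarrow> nat \<Rightarrow> nat \<Rightarrow> neuron list" where
  "neurons1 d T R =
    map Scaled [0..<d] @ map ScaledExcess [0..<d] @ grid T R BucketSum @ grid T R BucketSumExcess"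

definition neurons2 :: "nat \<Rightarrow> nat \<Rightarrow> neuron list" where
  "neurons2 T R = grid T R CountExcess @ grid T R Count @ grid T R Value"

definition neurons3 :: "nat \<Rightarrow> nat \<Rightarrow> neuron list" where
  "neurons3 T R = map Injective [0..<T] @ grid T R Value @ grid T R Occupied"

definition neurons4 :: "nat \<Rightarrow> nat \<Rightarrow> neuron list" where
  "neurons4 T R = map Selected [0..<T] @ grid T R Value @ grid T R Occupied"

definition neurons5 :: "nat \<Rightarrow> nat \<Rightarrow> nat \<Rightarrow> neuron list" where
  "neurons5 k T R = grid T R SelValue @ grid T R SelOccupied @ map One [0..<k]"

definition neurons6 :: "nat \<Rightarrow> nat \<Rightarrow> neuron list" where
  "neurons6 k R = concat (map (\<lambda>s. concat (map (\<lambda>r. map (Pick s r) [0..<k]) [0..<R])) [1, 2, 3, 4])"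

definition neurons7 :: "nat \<Rightarrow> neuron list" where
  "neurons7 k = map Out [0..<k]"

definition extraction_net :: "real \<Rightarrow> (nat \<Rightarrow> nat \<Rightarrow> nat) \<Rightarrow> nat \<Rightarrow> nat \<Rightarrow> nat \<Rightarrow> nat \<Rightarrow> layer list" where
  "extraction_net \<delta> h d k T R =
    (let c = connect (weight \<delta> h) bias in
     [c (neurons0 d) (neurons1 d T R), c (neurons1 d T R) (neurons2 T R), c (neurons2 T R) (neurons3 T R),
      c (neurons3 T R) (neurons4 T R), c (neurons4 T R) (neurons5 k T R), c (neurons5 k T R) (neurons6 k R),
      c (neurons6 k R) (neurons7 k)])"

definition net_input :: "real \<Rightarrow> (nat \<Rightarrow> nat \<Rightarrow> nat) \<Rightarrow> neuron list \<Rightarrow> (neuron \<Rightarrow> real) \<Rightarrow> neuron \<Rightarrow> real" where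
  "net_input \<delta> h us v w = (\<Sum>u\<leftarrow>us. weight \<delta> h w u * v u)"

definition activation :: "real \<Rightarrow> (nat \<Rightarrow> nat \<Rightarrow> nat) \<Rightarrow> neuron list \<Rightarrow> (neuron \<Rightarrow> real) \<Rightarrow> neuron \<Rightarrow> real" where
  "activation \<delta> h us v w = relu (net_input \<delta> h us v w + bias w)"

lemma map_relu_connect:
  "map relu (apply_affine (connect (weight \<delta> h) bias us ws) (map v us)) = map (activation \<delta> h us v) ws"
  by (simp add: apply_affine_connect activation_def net_input_def)

lemma eval_extraction_net:
  "eval_net (extraction_net \<delta> h d k T R) (map v (neurons0 d)) =
   map (\<lambda>w. net_input \<delta> h (neurons6 k R) (activation \<delta> h (neurons5 k T R) (activation \<delta> h (neurons4 T R)
     (activation \<delta> h (neurons3 T R) (activation \<delta> h (neurons2 T R) (activation \<delta> h (neurons1 d T R)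
     (activation \<delta> h (neurons0 d) v)))))) w + bias w) (neurons7 k)"
  by (simp add: extraction_net_def Let_def map_relu_connect, simp add: apply_affine_connect net_input_def)

lemma sum_list_grid: "(\<Sum>u\<leftarrow>grid T R F. g u) = (\<Sum>t<T. \<Sum>r<R. g (F t r))"
  by (simp add: grid_def sum_list_map_concat comp_def sum_list_map_upt_zero)

lemmas net_input_simps = net_input_def weight_def if_zero_mult if_if_zero_mult if_zero_uminus
  sum_list_grid sum_list_map_upt_zero sum_list_map_concat sum.delta sum_negf

lemma net_input_Scaled:
  "net_input \<delta> h (neurons0 d) v (Scaled i) = (if i < d then v (Input i) / \<delta> else 0)"
  by (simp add: net_input_simps neurons0_def cong: if_cong)

lemma net_input_ScaledExcess:
  "net_input \<delta> h (neurons0 d) v (ScaledExcess i) = (if i < d then v (Input i) / \<delta> else 0)"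
  by (simp add: net_input_simps neurons0_def cong: if_cong)

lemma net_input_BucketSum:
  "net_input \<delta> h (neurons0 d) v (BucketSum t r) = (\<Sum>i<d. if h t i = r then v (Input i) else 0)"
  by (simp add: net_input_simps neurons0_def cong: if_cong)

lemma net_input_BucketSumExcess:
  "net_input \<delta> h (neurons0 d) v (BucketSumExcess t r) = (\<Sum>i<d. if h t i = r then v (Input i) else 0)"
  by (simp add: net_input_simps neurons0_def cong: if_cong)

lemma net_input_CountExcess:
  "net_input \<delta> h (neurons1 d T R) v (CountExcess t r)
     = (\<Sum>i<d. if h t i = r then v (Scaled i) - v (ScaledExcess i) else 0)"
  by (simp add: net_input_simps neurons1_def cong: if_cong)
    (subst sum_subtractf[symmetric], rule sum.cong, auto)

lemma net_input_Count:
  "net_input \<delta> h (neurons1 d T R) v (Count t r)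
     = (\<Sum>i<d. if h t i = r then v (Scaled i) - v (ScaledExcess i) else 0)"
  by (simp add: net_input_simps neurons1_def cong: if_cong)
    (subst sum_subtractf[symmetric], rule sum.cong, auto)

lemma net_input_Value_1:
  "net_input \<delta> h (neurons1 d T R) v (Value t r)
     = (if t < T \<and> r < R then v (BucketSum t r) - v (BucketSumExcess t r) else 0)"
  by (simp add: net_input_simps neurons1_def cong: if_cong)

lemma net_input_Injective:
  "net_input \<delta> h (neurons2 T R) v (Injective t) = (if t < T then - (\<Sum>r<R. v (CountExcess t r)) else 0)"
  by (simp add: net_input_simps neurons2_def cong: if_cong)

lemma net_input_Value_2:
  "net_input \<delta> h (neurons2 T R) v (Value t r) = (if t < T \<and> r < R then v (Value t r) else 0)"
  by (simp add: net_input_simps neurons2_def cong: if_cong)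

lemma net_input_Occupied_2:
  "net_input \<delta> h (neurons2 T R) v (Occupied t r)
     = (if t < T \<and> r < R then v (Count t r) - v (CountExcess t r) else 0)"
  by (simp add: net_input_simps neurons2_def cong: if_cong)

lemma net_input_Selected:
  "net_input \<delta> h (neurons3 T R) v (Selected t)
     = (if t < T then v (Injective t) else 0) - (\<Sum>t'<T. if t' < t then v (Injective t') else 0)"
proof -
  have "(if i = t then 1 else - (if i < t then 1 else 0)) * v (Injective i)
      = (if i = t then v (Injective t) else 0) - (if i < t then v (Injective i) else 0)" for i
    by auto
  then show ?thesis
    by (simp add: net_input_simps neurons3_def sum_subtractf cong: if_cong)
qed

lemma net_input_Value_3:
  "net_input \<delta> h (neurons3 T R) v (Value t r) = (if t < T \<and> r < R then v (Value t r) else 0)"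
  by (simp add: net_input_simps neurons3_def cong: if_cong)

lemma net_input_Occupied_3:
  "net_input \<delta> h (neurons3 T R) v (Occupied t r) = (if t < T \<and> r < R then v (Occupied t r) else 0)"
  by (simp add: net_input_simps neurons3_def cong: if_cong)

lemma net_input_SelValue:
  "net_input \<delta> h (neurons4 T R) v (SelValue t r)
     = (if t < T \<and> r < R then v (Value t r) else 0) + (if t < T then v (Selected t) else 0)"
  by (simp add: net_input_simps neurons4_def cong: if_cong)

lemma net_input_SelOccupied:
  "net_input \<delta> h (neurons4 T R) v (SelOccupied t r)
     = (if t < T \<and> r < R then v (Occupied t r) else 0) + (if t < T then v (Selected t) else 0)"
  by (simp add: net_input_simps neurons4_def cong: if_cong)

lemma net_input_One: "net_input \<delta> h (neurons4 T R) v (One l) = 0"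
  by (simp add: net_input_simps neurons4_def)

lemma net_input_Pick:
  "net_input \<delta> h (neurons5 k T R) v (Pick s r j) =
     (if s = 1 \<or> s = 3 then (\<Sum>t<T. if r < R then v (SelValue t r) else 0) else 0)
     - (\<Sum>t<T. \<Sum>r'<R. if r' < r then v (SelOccupied t r') else 0) + (\<Sum>l<k. if l < j then v (One l) else 0)"
  by (simp add: net_input_simps neurons5_def cong: if_cong)

lemma net_input_Out:
  "net_input \<delta> h (neurons6 k R) v (Out j) =
     (if j < k then (\<Sum>r<R. v (Pick 1 r j) - v (Pick 2 r j) - v (Pick 3 r j) + v (Pick 4 r j)) else 0)"
  by (simp add: net_input_simps neurons6_def sum.distrib sum_subtractf cong: if_cong)

lemma length_grid [simp]: "length (grid T R F) = T * R"
  by (simp add: grid_def length_concat comp_def sum_list_map_upt_zero)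

lemma length_neurons:
  "length (neurons0 d) = d" "length (neurons1 d T R) = 2 * d + 2 * (T * R)"
  "length (neurons2 T R) = 3 * (T * R)" "length (neurons3 T R) = T + 2 * (T * R)"
  "length (neurons4 T R) = T + 2 * (T * R)" "length (neurons5 k T R) = 2 * (T * R) + k"
  "length (neurons6 k R) = 4 * (R * k)" "length (neurons7 k) = k"
  by (simp_all add: neurons0_def neurons1_def neurons2_def neurons3_def neurons4_def neurons5_def
      neurons6_def neurons7_def length_concat comp_def sum_list_map_upt_zero)

lemma valid_net_extraction_net: "valid_net d k (extraction_net \<delta> h d k T R)"
proof -
  have "layer_out (extraction_net \<delta> h d k T R ! i) = layer_in (extraction_net \<delta> h d k T R ! Suc i)"
    if "Suc i < 7" for i
  proof -
    have "i = 0 \<or> i = 1 \<or> i = 2 \<or> i = 3 \<or> i = 4 \<or> i = 5"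
      using that by linarith
    then show ?thesis
      by (auto simp: extraction_net_def Let_def)
  qed
  then show ?thesis
    by (simp add: valid_net_def extraction_net_def Let_def length_neurons)
qed

lemma depth_extraction_net: "net_depth (extraction_net \<delta> h d k T R) = 7"
  by (simp add: net_depth_def extraction_net_def Let_def)

lemma width_extraction_net:
  "net_width (extraction_net \<delta> h d k T R) \<le> 2 * d + 3 * (T * R) + T + k + 4 * (R * k)"
  by (simp add: net_width_def extraction_net_def Let_def length_neurons)

lemma weights_bounded_extraction_net:
  assumes "0 < \<delta>" "\<delta> \<le> 1"
  shows "weights_bounded (1 / \<delta>) (extraction_net \<delta> h d k T R)"
proof -
  have "\<bar>weight \<delta> h w u\<bar> \<le> 1 / \<delta>" "\<bar>bias w\<bar> \<le> 1 / \<delta>" for w u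
    using assms by (cases w; cases u; simp add: weight_def bias_def)+
  then show ?thesis
    by (simp add: weights_bounded_def extraction_net_def Let_def connect_def)
qed

section \<open>Correctness of the extraction network\<close>

locale extraction_run =
  fixes \<delta> :: real and d k T R :: nat and h :: "nat \<Rightarrow> nat \<Rightarrow> nat" and x :: "real list"
  assumes delta_pos: "0 < \<delta>"
    and length_x: "length x = d"
    and x_range: "\<And>i. i < d \<Longrightarrow> x ! i \<noteq> 0 \<Longrightarrow> \<delta> \<le> x ! i \<and> x ! i \<le> 1 - \<delta>"
    and hash_range: "\<And>t i. t < T \<Longrightarrow> i < d \<Longrightarrow> h t i < R"
    and card_support: "card {i. i < d \<and> x ! i \<noteq> 0} \<le> k"
    and some_hash_inj: "\<exists>t<T. inj_on (h t) {i. i < d \<and> x ! i \<noteq> 0}"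
begin

definition supp :: "nat set" where
  "supp = {i. i < d \<and> x ! i \<noteq> 0}"

definition act0 :: "neuron \<Rightarrow> real" where
  "act0 u = (case u of Input i \<Rightarrow> x ! i | _ \<Rightarrow> 0)"

definition act1 :: "neuron \<Rightarrow> real" where "act1 = activation \<delta> h (neurons0 d) act0"
definition act2 :: "neuron \<Rightarrow> real" where "act2 = activation \<delta> h (neurons1 d T R) act1"
definition act3 :: "neuron \<Rightarrow> real" where "act3 = activation \<delta> h (neurons2 T R) act2"
definition act4 :: "neuron \<Rightarrow> real" where "act4 = activation \<delta> h (neurons3 T R) act3"
definition act5 :: "neuron \<Rightarrow> real" where "act5 = activation \<delta> h (neurons4 T R) act4"
definition act6 :: "neuron \<Rightarrow> real" where "act6 = activation \<delta> h (neurons5 k T R) act5"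

definition bucket_sum :: "nat \<Rightarrow> nat \<Rightarrow> real" where
  "bucket_sum t r = (\<Sum>i<d. if h t i = r then x ! i else 0)"

definition bucket_count :: "nat \<Rightarrow> nat \<Rightarrow> real" where
  "bucket_count t r = real (card {i \<in> supp. h t i = r})"

lemma finite_supp: "finite supp"
  by (simp add: supp_def)

lemma x_nonneg: "i < d \<Longrightarrow> 0 \<le> x ! i"
  using x_range delta_pos by (cases "x ! i = 0") force+

lemma x_less_one: "i < d \<Longrightarrow> x ! i < 1"
  using x_range delta_pos by (cases "x ! i = 0") force+

lemma bucket_sum_nonneg: "0 \<le> bucket_sum t r"
  unfolding bucket_sum_def by (rule sum_nonneg) (simp add: x_nonneg)

lemma bucket_count_nonneg: "0 \<le> bucket_count t r"
  by (simp add: bucket_count_def)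

lemma act1_Scaled: "i < d \<Longrightarrow> act1 (Scaled i) = x ! i / \<delta>"
  using x_nonneg[of i] delta_pos
  by (simp add: act1_def activation_def net_input_Scaled bias_def act0_def relu_pos)

lemma act1_ScaledExcess: "i < d \<Longrightarrow> act1 (ScaledExcess i) = relu (x ! i / \<delta> - 1)"
  by (simp add: act1_def activation_def net_input_ScaledExcess bias_def act0_def)

lemma act1_Scaled_diff: "i < d \<Longrightarrow> act1 (Scaled i) - act1 (ScaledExcess i) = (if i \<in> supp then 1 else 0)"
proof -
  assume "i < d"
  moreover have "1 \<le> x ! i / \<delta>" if "x ! i \<noteq> 0"
    using x_range[OF \<open>i < d\<close> that] delta_pos by simp
  ultimately show ?thesis
    by (auto simp: act1_Scaled act1_ScaledExcess supp_def relu_def)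
qed

lemma act0_bucket_sum: "(\<Sum>i<d. if h t i = r then act0 (Input i) else 0) = bucket_sum t r"
  by (simp add: act0_def bucket_sum_def cong: if_cong)

lemma act1_BucketSum: "act1 (BucketSum t r) = bucket_sum t r"
  by (simp add: act1_def activation_def net_input_BucketSum bias_def act0_bucket_sum relu_pos
      bucket_sum_nonneg)

lemma act1_BucketSumExcess: "act1 (BucketSumExcess t r) = relu (bucket_sum t r - 1)"
  by (simp add: act1_def activation_def net_input_BucketSumExcess bias_def act0_bucket_sum)

lemma act1_bucket_count:
  "(\<Sum>i<d. if h t i = r then act1 (Scaled i) - act1 (ScaledExcess i) else 0) = bucket_count t r"
proof -
  have "(\<Sum>i<d. if h t i = r then act1 (Scaled i) - act1 (ScaledExcess i) else 0)
      = (\<Sum>i<d. if i \<in> supp \<and> h t i = r then 1 else 0)"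
    by (intro sum.cong) (auto simp: act1_Scaled_diff)
  also have "\<dots> = bucket_count t r"
    by (simp add: sum_indicator_card bucket_count_def supp_def conj_ac)
  finally show ?thesis .
qed

lemma act2_CountExcess: "act2 (CountExcess t r) = relu (bucket_count t r - 1)"
  by (simp add: act2_def activation_def net_input_CountExcess bias_def act1_bucket_count)

lemma act2_Count: "act2 (Count t r) = bucket_count t r"
  by (simp add: act2_def activation_def net_input_Count bias_def act1_bucket_count relu_pos
      bucket_count_nonneg)

lemma act2_Value: "t < T \<Longrightarrow> r < R \<Longrightarrow> act2 (Value t r) = min (bucket_sum t r) 1"
  by (simp add: act2_def activation_def net_input_Value_1 bias_def act1_BucketSum act1_BucketSumExcess
      relu_min_one bucket_sum_nonneg)

lemma act3_Injective: "t < T \<Longrightarrow> act3 (Injective t) = relu (1 - (\<Sum>r<R. relu (bucket_count t r - 1)))"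
  by (simp add: act3_def activation_def net_input_Injective bias_def act2_CountExcess)

lemma act3_Value: "t < T \<Longrightarrow> r < R \<Longrightarrow> act3 (Value t r) = min (bucket_sum t r) 1"
  by (simp add: act3_def activation_def net_input_Value_2 bias_def act2_Value relu_pos bucket_sum_nonneg)

lemma act3_Occupied: "t < T \<Longrightarrow> r < R \<Longrightarrow> act3 (Occupied t r) = min (bucket_count t r) 1"
  by (simp add: act3_def activation_def net_input_Occupied_2 bias_def act2_Count act2_CountExcess
      relu_min_one bucket_count_nonneg)

lemma act4_Selected:
  "t < T \<Longrightarrow> act4 (Selected t) = relu (act3 (Injective t) - (\<Sum>t'<t. act3 (Injective t')))"
  by (simp add: act4_def activation_def net_input_Selected bias_def sum_lessThan_if_less)

lemma act4_Value: "t < T \<Longrightarrow> r < R \<Longrightarrow> act4 (Value t r) = min (bucket_sum t r) 1"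
  by (simp add: act4_def activation_def net_input_Value_3 bias_def act3_Value relu_pos bucket_sum_nonneg)

lemma act4_Occupied: "t < T \<Longrightarrow> r < R \<Longrightarrow> act4 (Occupied t r) = min (bucket_count t r) 1"
  by (simp add: act4_def activation_def net_input_Occupied_3 bias_def act3_Occupied relu_pos
      bucket_count_nonneg)

lemma act5_SelValue:
  "t < T \<Longrightarrow> r < R \<Longrightarrow> act5 (SelValue t r) = relu (min (bucket_sum t r) 1 + act4 (Selected t) - 1)"
  by (simp add: act5_def activation_def net_input_SelValue bias_def act4_Value)

lemma act5_SelOccupied:
  "t < T \<Longrightarrow> r < R \<Longrightarrow> act5 (SelOccupied t r) = relu (min (bucket_count t r) 1 + act4 (Selected t) - 1)"
  by (simp add: act5_def activation_def net_input_SelOccupied bias_def act4_Occupied)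

lemma act5_One: "act5 (One l) = 1"
  by (simp add: act5_def activation_def net_input_One bias_def relu_def)

lemma act6_Pick:
  assumes "j \<le> k"
  shows "act6 (Pick s r j) =
    relu ((if s = 1 \<or> s = 3 then (\<Sum>t<T. if r < R then act5 (SelValue t r) else 0) else 0)
      - (\<Sum>t<T. \<Sum>r'<R. if r' < r then act5 (SelOccupied t r') else 0) + real j
      + (if s = 3 \<or> s = 4 then -1 else 0))"
proof -
  have "(\<Sum>l<k. if l < j then act5 (One l) else 0) = real j"
    using assms by (simp add: act5_One sum_lessThan_if_less)
  then show ?thesis
    by (simp add: act6_def activation_def net_input_Pick bias_def)
qed

lemma eval_extraction_net_input: "eval_net (extraction_net \<delta> h d k T R) x =
   map (\<lambda>j. \<Sum>r<R. act6 (Pick 1 r j) - act6 (Pick 2 r j) - act6 (Pick 3 r j) + act6 (Pick 4 r j)) [0..<k]"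
proof -
  have "map act0 (neurons0 d) = x"
    by (simp add: neurons0_def act0_def length_x[symmetric] comp_def map_nth)
  then have "eval_net (extraction_net \<delta> h d k T R) x
      = map (\<lambda>w. net_input \<delta> h (neurons6 k R) act6 w + bias w) (neurons7 k)"
    using eval_extraction_net[of \<delta> h d k T R act0]
    by (simp only: act6_def act5_def act4_def act3_def act2_def act1_def)
  then show ?thesis
    by (simp add: neurons7_def net_input_Out bias_def)
qed

definition t0 :: nat where
  "t0 = (LEAST t. inj_on (h t) supp)"

lemma t0_less: "t0 < T"
  and inj_on_t0: "inj_on (h t0) supp"
  and not_inj_on_before_t0: "t < t0 \<Longrightarrow> \<not> inj_on (h t) supp"
proof -
  obtain t1 where "t1 < T" "inj_on (h t1) supp"
    using some_hash_inj unfolding supp_def by blast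
  from \<open>inj_on (h t1) supp\<close> show "inj_on (h t0) supp"
    unfolding t0_def by (rule LeastI)
  have "t0 \<le> t1"
    unfolding t0_def using \<open>inj_on (h t1) supp\<close> by (rule Least_le)
  then show "t0 < T"
    using \<open>t1 < T\<close> by simp
  show "t < t0 \<Longrightarrow> \<not> inj_on (h t) supp"
    unfolding t0_def by (rule not_less_Least)
qed

lemma act3_Injective_eq:
  assumes "t < T"
  shows "act3 (Injective t) = (if inj_on (h t) supp then 1 else 0)"
proof (cases "inj_on (h t) supp")
  case True
  then have "relu (bucket_count t r - 1) = 0" for r
    using finite_supp by (simp add: inj_on_iff_card_fibers_le_one bucket_count_def relu_nonpos)
  then show ?thesis
    using assms True by (simp add: act3_Injective relu_def)
next
  case False
  obtain r where "\<not> card {i \<in> supp. h t i = r} \<le> 1"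
    using False finite_supp by (auto simp: inj_on_iff_card_fibers_le_one)
  then have "1 \<le> relu (bucket_count t r - 1)" and "{i \<in> supp. h t i = r} \<noteq> {}"
    by (auto simp: bucket_count_def relu_def simp del: Collect_empty_eq)
  moreover have "r < R"
    using assms \<open>{i \<in> supp. h t i = r} \<noteq> {}\<close> hash_range by (auto simp: supp_def)
  then have "relu (bucket_count t r - 1) \<le> (\<Sum>r<R. relu (bucket_count t r - 1))"
    by (intro member_le_sum) (auto simp: relu_nonneg)
  ultimately have "1 \<le> (\<Sum>r<R. relu (bucket_count t r - 1))"
    by linarith
  then show ?thesis
    using assms False by (simp add: act3_Injective relu_nonpos)
qed

lemma act4_Selected_eq:
  assumes "t < T"
  shows "act4 (Selected t) = (if t = t0 then 1 else 0)"
proof -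
  let ?earlier = "\<Sum>t'<t. act3 (Injective t')"
  have earlier_eq: "?earlier = (\<Sum>t'<t. if inj_on (h t') supp then 1 else 0)"
    using assms by (intro sum.cong) (auto simp: act3_Injective_eq)
  consider "t < t0" | "t = t0" | "t0 < t"
    by linarith
  then show ?thesis
  proof cases
    case 1
    have "0 \<le> ?earlier"
      unfolding earlier_eq by (intro sum_nonneg) simp
    then show ?thesis
      using 1 assms not_inj_on_before_t0[of t] by (simp add: act4_Selected act3_Injective_eq relu_nonpos)
  next
    case 2
    have "?earlier = 0"
      unfolding earlier_eq using 2 not_inj_on_before_t0 by (intro sum.neutral) auto
    then show ?thesis
      using 2 assms inj_on_t0 by (simp add: act4_Selected act3_Injective_eq relu_def)
  next
    case 3
    have "1 \<le> ?earlier"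
      unfolding earlier_eq using 3 inj_on_t0
        member_le_sum[of t0 "{..<t}" "\<lambda>t'. if inj_on (h t') supp then 1 else (0::real)"]
      by simp
    then show ?thesis
      using 3 assms by (simp add: act4_Selected act3_Injective_eq relu_def)
  qed
qed

lemma act5_SelValue_eq:
  "t < T \<Longrightarrow> r < R \<Longrightarrow> act5 (SelValue t r) = (if t = t0 then min (bucket_sum t0 r) 1 else 0)"
  by (simp add: act5_SelValue act4_Selected_eq relu_def bucket_sum_nonneg)

lemma act5_SelOccupied_eq:
  "t < T \<Longrightarrow> r < R \<Longrightarrow> act5 (SelOccupied t r) = (if t = t0 then min (bucket_count t0 r) 1 else 0)"
  by (simp add: act5_SelOccupied act4_Selected_eq relu_def bucket_count_nonneg)

definition used :: "nat set" where
  "used = h t0 ` supp"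

lemma used_subset: "used \<subseteq> {..<R}"
  using hash_range[OF t0_less] by (auto simp: used_def supp_def)

lemma bucket_count_t0: "min (bucket_count t0 r) 1 = (if r \<in> used then 1 else 0)"
proof -
  have "card {i \<in> supp. h t0 i = r} \<le> 1"
    using inj_on_t0 finite_supp by (simp add: inj_on_iff_card_fibers_le_one)
  moreover have "{i \<in> supp. h t0 i = r} \<noteq> {} \<longleftrightarrow> r \<in> used"
    by (auto simp: used_def)
  ultimately show ?thesis
    using finite_supp by (auto simp: bucket_count_def le_Suc_eq)
qed

lemma bucket_sum_t0: "bucket_sum t0 r = (if r \<in> used then x ! the_inv_into supp (h t0) r else 0)"
proof -
  have "bucket_sum t0 r = (\<Sum>i\<in>{i \<in> supp. h t0 i = r}. x ! i)"
    unfolding bucket_sum_def sum.inter_filter[OF finite_lessThan, symmetric]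
    by (intro sum.mono_neutral_right) (auto simp: supp_def)
  also have "\<dots> = (if r \<in> used then x ! the_inv_into supp (h t0) r else 0)"
  proof (cases "r \<in> used")
    case True
    then obtain i where "i \<in> supp" "h t0 i = r"
      by (auto simp: used_def)
    then have "{i \<in> supp. h t0 i = r} = {i}" "the_inv_into supp (h t0) r = i"
      using inj_on_t0 by (auto simp: inj_on_def the_inv_into_f_eq)
    then show ?thesis
      using True by simp
  next
    case False
    then have "{i \<in> supp. h t0 i = r} = {}"
      by (auto simp: used_def)
    then show ?thesis
      using False by (simp only: sum.empty if_False)
  qed
  finally show ?thesis .
qed

lemma bucket_sum_t0_range: "0 \<le> bucket_sum t0 r \<and> bucket_sum t0 r \<le> 1"
proof -
  have "x ! the_inv_into supp (h t0) r < 1" if "r \<in> used"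
  proof -
    have "the_inv_into supp (h t0) r \<in> supp"
      using that inj_on_t0 by (auto simp: used_def intro: the_inv_into_into)
    then show ?thesis
      by (simp add: supp_def x_less_one)
  qed
  then show ?thesis
    using bucket_sum_nonneg[of t0 r] by (auto simp: bucket_sum_t0)
qed

lemma gathered_value: "r < R \<Longrightarrow> (\<Sum>t<T. act5 (SelValue t r)) = bucket_sum t0 r"
proof -
  assume "r < R"
  then have "(\<Sum>t<T. act5 (SelValue t r)) = (\<Sum>t<T. if t = t0 then min (bucket_sum t0 r) 1 else 0)"
    by (intro sum.cong) (simp_all add: act5_SelValue_eq)
  then show ?thesis
    using t0_less bucket_sum_t0_range[of r] by simp
qed

lemma gathered_rank:
  "r < R \<Longrightarrow>
    (\<Sum>t<T. \<Sum>r'<R. if r' < r then act5 (SelOccupied t r') else 0) = real (card {r' \<in> used. r' < r})"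
proof -
  assume "r < R"
  have "(\<Sum>t<T. \<Sum>r'<R. if r' < r then act5 (SelOccupied t r') else 0)
      = (\<Sum>t<T. \<Sum>r'<R. if r' < r then (if t = t0 then min (bucket_count t0 r') 1 else 0) else 0)"
    by (intro sum.cong refl) (simp add: act5_SelOccupied_eq)
  also have "\<dots> = (\<Sum>r'<R. \<Sum>t<T. if r' < r then (if t = t0 then min (bucket_count t0 r') 1 else 0) else 0)"
    by (rule sum.swap)
  also have "\<dots> = (\<Sum>r'<r. if r' \<in> used then 1 else 0)"
    using t0_less \<open>r < R\<close> by (simp add: bucket_count_t0 sum_lessThan_if_less)
  also have "\<dots> = real (card {r' \<in> used. r' < r})"
    by (simp add: sum_indicator_card lessThan_def conj_commute)
  finally show ?thesis .
qed

lemma output_eq_gathered: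
  "j < k \<Longrightarrow>
    (\<Sum>r<R. act6 (Pick 1 r j) - act6 (Pick 2 r j) - act6 (Pick 3 r j) + act6 (Pick 4 r j))
      = (\<Sum>r<R. if r \<in> used \<and> card {r' \<in> used. r' < r} = j then x ! the_inv_into supp (h t0) r else 0)"
proof (rule sum.cong)
  fix r assume "j < k" "r \<in> {..<R}"
  then show "act6 (Pick 1 r j) - act6 (Pick 2 r j) - act6 (Pick 3 r j) + act6 (Pick 4 r j) =
      (if r \<in> used \<and> card {r' \<in> used. r' < r} = j then x ! the_inv_into supp (h t0) r else 0)"
    using relu_pick[of "bucket_sum t0 r" "card {r' \<in> used. r' < r}" j] bucket_sum_t0_range[of r]
    by (simp add: act6_Pick gathered_value gathered_rank bucket_sum_t0 algebra_simps)
qed simp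

lemma length_eval_extraction_net: "length (eval_net (extraction_net \<delta> h d k T R) x) = k"
  by (simp add: eval_extraction_net_input)

theorem extraction_net_extracts_nonzeros:
  "mset (filter (\<lambda>z. z \<noteq> 0) (eval_net (extraction_net \<delta> h d k T R) x)) = mset (filter (\<lambda>z. z \<noteq> 0) x)"
proof -
  have "card used \<le> k"
    using card_image_le[OF finite_supp, of "h t0"] card_support by (simp add: used_def supp_def)
  moreover have "x ! the_inv_into supp (h t0) r \<noteq> 0" if "r \<in> used" for r
    using that inj_on_t0 by (auto simp: used_def supp_def the_inv_into_f_f)
  ultimately have "mset (filter (\<lambda>z. z \<noteq> 0) (eval_net (extraction_net \<delta> h d k T R) x))
      = image_mset (\<lambda>r. x ! the_inv_into supp (h t0) r) (mset_set used)"
    unfolding eval_extraction_net_input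
    by (rule mset_filter_nonzero_gather_by_rank[OF used_subset _ _ output_eq_gathered])
  also have "\<dots> = image_mset (\<lambda>i. x ! the_inv_into supp (h t0) (h t0 i)) (mset_set supp)"
    using inj_on_t0 by (simp add: used_def image_mset_mset_set[symmetric] multiset.map_comp comp_def)
  also have "\<dots> = image_mset ((!) x) (mset_set supp)"
    using inj_on_t0 finite_supp by (intro image_mset_cong) (simp add: the_inv_into_f_f)
  also have "\<dots> = mset (filter (\<lambda>z. z \<noteq> 0) x)"
    using mset_filter_nonzero_conv_nth[of x] by (simp add: supp_def length_x)
  finally show ?thesis .
qed

end

section \<open>Size bounds and the main theorem\<close>

lemma log2_le_powr:
  fixes \<epsilon> D :: real
  assumes "0 < \<epsilon>" "1 \<le> D"
  shows "log 2 (D + 1) \<le> 1 + 2 * D powr \<epsilon> / \<epsilon>"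
proof -
  have "1/2 \<le> ln (2::real)"
    using exp_half_le2 by (subst ln_ge_iff) auto
  have "log 2 (D + 1) \<le> log 2 (2 * D)"
    using assms(2) by simp
  also have "\<dots> = 1 + ln D / ln 2"
    using assms(2) by (simp add: log_mult) (simp add: log_def)
  also have "\<dots> \<le> 1 + 2 * ln D"
    using \<open>1/2 \<le> ln 2\<close> assms(2) mult_left_mono[of 1 "2 * ln 2" "ln D"] by (simp add: field_simps)
  also have "\<dots> \<le> 1 + 2 * D powr \<epsilon> / \<epsilon>"
    using ln_powr_bound[OF assms(2,1)] by simp
  finally show ?thesis .
qed

lemma extraction_width_le:
  fixes \<epsilon> \<gamma> :: real and d k b :: nat
  assumes "0 < \<epsilon>" "0 \<le> \<gamma>" "1 \<le> d" "1 \<le> k"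
    and k_le: "real k \<le> real d powr \<epsilon>" and b_le: "real b \<le> log 2 (real d + 1) + 1"
  shows "real (2 * d + 3 * ((k * b + 1) * (2 * k ^ 2)) + (k * b + 1) + k + 4 * (2 * k ^ 2 * k))
     \<le> (40 + 16 / \<epsilon>) * real d powr max (4 * \<epsilon> + 2 * \<gamma>) 1"
proof -
  define D E K B where "D = real d" and "E = D powr \<epsilon>" and "K = real k" and "B = real b"
  define M where "M = D powr max (4 * \<epsilon> + 2 * \<gamma>) 1"
  have "1 \<le> D" "1 \<le> K" "K \<le> E" "0 \<le> B"
    using assms by (simp_all add: D_def E_def K_def B_def)
  have "1 \<le> E"
    unfolding E_def using \<open>1 \<le> D\<close> assms(1) by (simp add: ge_one_powr_ge_zero)
  have "B \<le> 2 + 2 * E / \<epsilon>"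
    using b_le log2_le_powr[OF assms(1) \<open>1 \<le> D\<close>] by (simp add: B_def E_def D_def)
  have "E ^ 4 = D powr (4 * \<epsilon>)"
    unfolding E_def using \<open>1 \<le> D\<close> by (simp add: powr_powr powr_realpow[symmetric] mult.commute)
  also have "\<dots> \<le> M"
    unfolding M_def using \<open>1 \<le> D\<close> assms(2) by (intro powr_mono) auto
  finally have "E ^ 4 \<le> M" .
  have "D \<le> M"
    unfolding M_def using \<open>1 \<le> D\<close> powr_mono[of 1 "max (4 * \<epsilon> + 2 * \<gamma>) 1" D] by simp
  have "K ^ 3 \<le> E ^ 3" "E ^ 3 \<le> E ^ 4"
    using \<open>1 \<le> K\<close> \<open>K \<le> E\<close> \<open>1 \<le> E\<close> by (auto intro: power_mono power_increasing)
  have "K \<le> K ^ 3" "K ^ 2 \<le> K ^ 3" "1 \<le> K ^ 3"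
    using \<open>1 \<le> K\<close> power_increasing[of 1 3 K] power_increasing[of 2 3 K] by auto
  have "K ^ 3 * B \<le> E ^ 3 * (2 + 2 * E / \<epsilon>)"
    using \<open>K ^ 3 \<le> E ^ 3\<close> \<open>B \<le> 2 + 2 * E / \<epsilon>\<close> \<open>0 \<le> B\<close> \<open>1 \<le> E\<close> by (intro mult_mono) auto
  also have "\<dots> = 2 * E ^ 3 + 2 * (E ^ 4 / \<epsilon>)"
    using assms(1) by (simp add: field_simps power_numeral_reduce)
  finally have "K ^ 3 * B \<le> 2 * M + 2 * (M / \<epsilon>)"
    using \<open>E ^ 3 \<le> E ^ 4\<close> \<open>E ^ 4 \<le> M\<close> divide_right_mono[OF \<open>E ^ 4 \<le> M\<close>, of \<epsilon>] assms(1) by linarith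
  moreover have "K * B \<le> K ^ 3 * B"
    using \<open>K \<le> K ^ 3\<close> \<open>0 \<le> B\<close> by (rule mult_right_mono)
  moreover have "0 \<le> M / \<epsilon>"
    using \<open>D \<le> M\<close> \<open>1 \<le> D\<close> assms(1) by simp
  moreover have "real (2 * d + 3 * ((k * b + 1) * (2 * k ^ 2)) + (k * b + 1) + k + 4 * (2 * k ^ 2 * k))
      = 2 * D + 6 * (K ^ 3 * B) + 6 * K ^ 2 + K * B + 1 + K + 8 * K ^ 3"
    by (simp add: D_def K_def B_def algebra_simps power2_eq_square power3_eq_cube)
  moreover have "(40 + 16 / \<epsilon>) * real d powr max (4 * \<epsilon> + 2 * \<gamma>) 1 = 40 * M + 16 * (M / \<epsilon>)"
    by (simp add: M_def D_def algebra_simps)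
  ultimately show ?thesis
    using \<open>K ^ 2 \<le> K ^ 3\<close> \<open>K \<le> K ^ 3\<close> \<open>1 \<le> K ^ 3\<close> \<open>K ^ 3 \<le> E ^ 3\<close> \<open>E ^ 3 \<le> E ^ 4\<close> \<open>E ^ 4 \<le> M\<close> \<open>D \<le> M\<close>
    by linarith
qed

lemma log2_ceiling_bounds:
  "Suc d \<le> 2 ^ nat \<lceil>log 2 (real d + 1)\<rceil>" "real (nat \<lceil>log 2 (real d + 1)\<rceil>) \<le> log 2 (real d + 1) + 1"
proof -
  have "0 \<le> log 2 (real d + 1)"
    by simp
  have "real (Suc d) = 2 powr log 2 (real d + 1)"
    by simp
  also have "\<dots> \<le> 2 powr real (nat \<lceil>log 2 (real d + 1)\<rceil>)"
    by (intro powr_mono) linarith+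
  also have "\<dots> = real (2 ^ nat \<lceil>log 2 (real d + 1)\<rceil>)"
    using powr_realpow[of 2 "nat \<lceil>log 2 (real d + 1)\<rceil>"] by simp
  finally show "Suc d \<le> 2 ^ nat \<lceil>log 2 (real d + 1)\<rceil>"
    by (simp only: of_nat_le_iff)
  show "real (nat \<lceil>log 2 (real d + 1)\<rceil>) \<le> log 2 (real d + 1) + 1"
    using \<open>0 \<le> log 2 (real d + 1)\<close> by linarith
qed

lemma extraction_run_hash_family:
  assumes "0 < \<delta>" "in_S d \<delta> x" "card {i. i < d \<and> x ! i \<noteq> 0} \<le> k"
    and hs: "length hs = T" "set hs \<subseteq> Pi\<^sub>E {..<d} (\<lambda>_. {..<R})"
      "\<And>S. S \<subseteq> {..<d} \<Longrightarrow> card S \<le> k \<Longrightarrow> \<exists>h\<in>set hs. inj_on h S"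
  shows "extraction_run \<delta> d k T R ((!) hs) x"
proof
  obtain h where "h \<in> set hs" "inj_on h {i. i < d \<and> x ! i \<noteq> 0}"
    using hs(3)[of "{i. i < d \<and> x ! i \<noteq> 0}"] assms(3) by auto
  moreover obtain t where "t < length hs" "hs ! t = h"
    using \<open>h \<in> set hs\<close> by (auto simp: in_set_conv_nth)
  ultimately show "\<exists>t<T. inj_on (hs ! t) {i. i < d \<and> x ! i \<noteq> 0}"
    using hs(1) by auto
  show "(hs ! t) i < R" if "t < T" "i < d" for t i
  proof -
    have "hs ! t \<in> Pi\<^sub>E {..<d} (\<lambda>_. {..<R})"
      using hs(1) that(1) by (intro subsetD[OF hs(2)] nth_mem) simp
    then show ?thesis
      using that(2) by (auto simp: PiE_iff)
  qed
qed (use assms(1-3) in \<open>simp_all add: in_S_def\<close>)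

lemma exists_extraction_net:
  assumes "0 < \<epsilon>" "0 \<le> \<gamma>" "0 < \<delta>" "\<delta> \<le> 1" "1 \<le> d" "1 \<le> k" "real k \<le> real d powr \<epsilon>"
  shows "\<exists>N. valid_net d k N \<and> net_depth N = 7
    \<and> real (net_width N) \<le> (40 + 16 / \<epsilon>) * real d powr max (4 * \<epsilon> + 2 * \<gamma>) 1
    \<and> weights_bounded (1 / \<delta>) N
    \<and> (\<forall>x. in_S d \<delta> x \<and> card {i. i < d \<and> x ! i \<noteq> 0} \<le> k \<longrightarrow>
         length (eval_net N x) = k \<and> mset (filter (\<lambda>z. z \<noteq> 0) (eval_net N x)) = mset (filter (\<lambda>z. z \<noteq> 0) x))"
proof -
  define b where "b = nat \<lceil>log 2 (real d + 1)\<rceil>"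
  obtain hs where hs: "length hs = k * b + 1" "set hs \<subseteq> Pi\<^sub>E {..<d} (\<lambda>_. {..<2 * k ^ 2})"
    "\<And>S. S \<subseteq> {..<d} \<Longrightarrow> card S \<le> k \<Longrightarrow> \<exists>h\<in>set hs. inj_on h S"
    using exists_hash_family[of k d b] assms(6) log2_ceiling_bounds(1) by (auto simp: b_def)
  define N where "N = extraction_net \<delta> ((!) hs) d k (k * b + 1) (2 * k ^ 2)"
  have "real (net_width N)
      \<le> real (2 * d + 3 * ((k * b + 1) * (2 * k ^ 2)) + (k * b + 1) + k + 4 * (2 * k ^ 2 * k))"
    unfolding N_def of_nat_le_iff by (rule width_extraction_net)
  also have "\<dots> \<le> (40 + 16 / \<epsilon>) * real d powr max (4 * \<epsilon> + 2 * \<gamma>) 1"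
    using assms log2_ceiling_bounds(2) by (intro extraction_width_le) (simp_all add: b_def)
  finally have "real (net_width N) \<le> (40 + 16 / \<epsilon>) * real d powr max (4 * \<epsilon> + 2 * \<gamma>) 1" .
  moreover have "length (eval_net N x) = k
      \<and> mset (filter (\<lambda>z. z \<noteq> 0) (eval_net N x)) = mset (filter (\<lambda>z. z \<noteq> 0) x)"
    if "in_S d \<delta> x" "card {i. i < d \<and> x ! i \<noteq> 0} \<le> k" for x
  proof -
    have "extraction_run \<delta> d k (k * b + 1) (2 * k ^ 2) ((!) hs) x"
      using assms(3) that hs by (rule extraction_run_hash_family)
    then show ?thesis
      unfolding N_def
      by (intro conjI extraction_run.length_eval_extraction_net
          extraction_run.extraction_net_extracts_nonzeros)
  qed
  ultimately show ?thesis
    using assms(3,4) by (intro exI[of _ N])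
      (simp add: N_def valid_net_extraction_net depth_extraction_net weights_bounded_extraction_net)
qed

definition zero_layer :: "nat \<Rightarrow> nat \<Rightarrow> layer" where
  "zero_layer n m = (n, m, \<lambda>_ _. 0, \<lambda>_. 0)"

definition zero_net :: "nat \<Rightarrow> nat \<Rightarrow> layer list" where
  "zero_net d k =
    [zero_layer d 1, zero_layer 1 1, zero_layer 1 1, zero_layer 1 1, zero_layer 1 1, zero_layer 1 1, zero_layer 1 k]"

lemma zero_net:
  assumes "0 \<le> B"
  shows "valid_net d k (zero_net d k)" "net_depth (zero_net d k) = 7" "net_width (zero_net d k) = 1"
    "weights_bounded B (zero_net d k)" "eval_net (zero_net d k) v = replicate k 0"
proof -
  have "layer_out (zero_net d k ! i) = layer_in (zero_net d k ! Suc i)" if "Suc i < 7" for i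
  proof -
    have "i = 0 \<or> i = 1 \<or> i = 2 \<or> i = 3 \<or> i = 4 \<or> i = 5"
      using that by linarith
    then show ?thesis
      by (auto simp: zero_net_def zero_layer_def layer_in_def layer_out_def)
  qed
  then show "valid_net d k (zero_net d k)"
    by (simp add: valid_net_def zero_net_def zero_layer_def layer_in_def layer_out_def)
  show "net_depth (zero_net d k) = 7" "net_width (zero_net d k) = 1" "weights_bounded B (zero_net d k)"
    using assms
    by (simp_all add: net_depth_def net_width_def weights_bounded_def zero_net_def zero_layer_def layer_out_def)
  show "eval_net (zero_net d k) v = replicate k 0"
    by (simp add: zero_net_def zero_layer_def apply_affine_def map_replicate_const)
qed

lemma in_S_nonzeros_Nil:
  assumes "1 / 2 < \<delta>" "in_S d \<delta> x"
  shows "filter (\<lambda>z. z \<noteq> 0) x = []"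
proof -
  have "x ! i = 0" if "i < length x" for i
  proof (rule ccontr)
    assume "x ! i \<noteq> 0"
    then have "\<delta> \<le> x ! i" "x ! i \<le> 1 - \<delta>"
      using assms(2) that by (auto simp: in_S_def)
    then show False
      using assms(1) by linarith
  qed
  then show ?thesis
    by (auto simp: filter_empty_conv in_set_conv_nth)
qed

lemma exists_sparse_extraction_net:
  assumes "0 < \<epsilon>" "0 \<le> \<gamma>" "0 < \<delta>" "1 \<le> d"
  shows "\<exists>N. valid_net d (nat \<lfloor>real d powr \<epsilon>\<rfloor>) N \<and> net_depth N = 7
    \<and> real (net_width N) \<le> (40 + 16 / \<epsilon>) * real d powr max (4 * \<epsilon> + 2 * \<gamma>) 1
    \<and> weights_bounded (1 / \<delta>) N
    \<and> (\<forall>x. sparse d \<epsilon> x \<and> in_S d \<delta> x \<longrightarrow> length (eval_net N x) = nat \<lfloor>real d powr \<epsilon>\<rfloor>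
         \<and> mset (filter (\<lambda>z. z \<noteq> 0) (eval_net N x)) = mset (filter (\<lambda>z. z \<noteq> 0) x))"
    (is "\<exists>N. valid_net d ?k N \<and> _ \<and> real (net_width N) \<le> ?C \<and> _")
proof -
  have "1 \<le> real d powr \<epsilon>"
    using assms(1,4) by (simp add: ge_one_powr_ge_zero)
  then have "1 \<le> ?k" "real ?k \<le> real d powr \<epsilon>"
    by linarith+
  have sparse_card: "card {i. i < d \<and> x ! i \<noteq> 0} \<le> ?k" if "sparse d \<epsilon> x" for x
    using that unfolding sparse_def by linarith
  show ?thesis
  proof (cases "\<delta> \<le> 1")
    case True
    with exists_extraction_net[OF assms(1-3) True assms(4) \<open>1 \<le> ?k\<close> \<open>real ?k \<le> real d powr \<epsilon>\<close>]
    obtain N where "valid_net d ?k N" "net_depth N = 7" "real (net_width N) \<le> ?C" "weights_bounded (1 / \<delta>) N"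
      "\<And>x. in_S d \<delta> x \<Longrightarrow> card {i. i < d \<and> x ! i \<noteq> 0} \<le> ?k \<Longrightarrow>
         length (eval_net N x) = ?k \<and> mset (filter (\<lambda>z. z \<noteq> 0) (eval_net N x)) = mset (filter (\<lambda>z. z \<noteq> 0) x)"
      by auto
    then show ?thesis
      using sparse_card by (intro exI[of _ N]) simp
  next
    case False
    have "1 \<le> ?C"
      using assms(1,4) by (intro mult_ge1_I) (simp_all add: ge_one_powr_ge_zero)
    moreover have "filter (\<lambda>z. z \<noteq> 0) x = []" if "in_S d \<delta> x" for x
      using False that by (intro in_S_nonzeros_Nil) simp_all
    ultimately show ?thesis
      using assms(3) zero_net[of "1 / \<delta>" d ?k] by (intro exI[of _ "zero_net d ?k"]) simp
  qed
qed

theorem propositionD4: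
  fixes \<epsilon> \<gamma> :: real
  assumes "\<epsilon> > 0" and "\<gamma> > 0"
  shows "\<exists>C>0. \<forall>\<delta>>0. \<forall>d::nat. real d \<ge> 1 / ((2 * \<epsilon> + \<gamma>) powr (1 / \<gamma>)) \<longrightarrow>
    (\<exists>N. valid_net d (nat \<lfloor>real d powr \<epsilon>\<rfloor>) N
       \<and> net_depth N = 7
       \<and> real (net_width N) \<le> C * real d powr (max (4 * \<epsilon> + 2 * \<gamma>) 1)
       \<and> weights_bounded (1 / \<delta>) N
       \<and> (\<forall>x. sparse d \<epsilon> x \<and> in_S d \<delta> x \<longrightarrow>
            length (eval_net N x) = nat \<lfloor>real d powr \<epsilon>\<rfloor>
            \<and> mset (filter (\<lambda>z. z \<noteq> 0) (eval_net N x)) = mset (filter (\<lambda>z. z \<noteq> 0) x)))"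
proof (intro exI[of _ "40 + 16 / \<epsilon>"] conjI allI impI exists_sparse_extraction_net)
  \<comment> \<open>the lower bound on d is only needed to exclude d = 0\<close>
  fix d :: nat
  assume "1 / ((2 * \<epsilon> + \<gamma>) powr (1 / \<gamma>)) \<le> real d"
  moreover have "0 < 1 / ((2 * \<epsilon> + \<gamma>) powr (1 / \<gamma>))"
    using assms by simp
  ultimately show "1 \<le> d"
    by linarith
qed (use assms in \<open>simp_all add: add_pos_pos\<close>)

end
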